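(* Let $M_1,M_2$ be binary matroids with common triangle $T=E(M_1)\cap E(M_2)$, where $T$ contains no cocircuit of $M_1$ or of $M_2$, and let $M=M_1\oplus_3M_2$. Then: (i) every cocircuit $C^*$ of $M$ is either a cocircuit of $M_1$ or of $M_2$ disjoint from $T$, or is of the form $C_1^*\triangle C_2^*$ where $C_i^*$ is a cocircuit of $M_i$ ($i=1,2$) and $C_1^*\cap T=C_2^*\cap T$ has exactly two elements; (ii) every cocircuit of $M_1$ or of $M_2$ disjoint from $T$ is a cocircuit of $M$; and if $C_i^*$ is a cocircuit of $M_i$ ($i=1,2$) with $C_1^*\cap T=C_2^*\cap T$ of size exactly two, then either $C_1^*\triangle C_2^*$ is a cocircuit of $M$, or $C_1^*\triangle C_2^*$ is the disjoint union of two cocircuits $R^*,Q^*$ of $M$, each of which meets both $E(M_1)$ and $E(M_2)$.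
   Context: If $M_1,M_2$ are binary matroids on $E_1,E_2$ with $E_1\cap E_2=T$ and $T$ a triangle of both, $P_T(M_1,M_2)$ denotes the generalized parallel connection across $T$: the matroid on $E_1\cup E_2$ whose flats are exactly the sets $F$ such that $F\cap E_i$ is a flat of $M_i$ for $i=1,2$. The 3-sum is $M_1\oplus_3 M_2=P_T(M_1,M_2)\setminus T$. $\triangle$ denotes symmetric difference. *)

theory Defs
  imports Main
begin

definition matroid :: "'a set \<Rightarrow> ('a set \<Rightarrow> bool) \<Rightarrow> bool" where
  "matroid E I \<longleftrightarrow> finite E \<and> I {} \<and> (\<forall>X. I X \<longrightarrow> X \<subseteq> E)
     \<and> (\<forall>X Y. I X \<and> Y \<subseteq> X \<longrightarrow> I Y)
     \<and> (\<forall>X Y. I X \<and> I Y \<and> card X < card Y \<longrightarrow> (\<exists>y\<in>Y - X. I (insert y X)))"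

text \<open>Binary = representable over GF(2): an indexed family of vectors in GF(2)^nat
  (vectors are maps nat to bool) such that X is independent iff X is a subset of E and
  the family restricted to X is linearly independent over GF(2), i.e. no nonempty
  subfamily sums to zero (the GF(2) sum of Y has i-th coordinate the parity of the
  number of y in Y with v y i).\<close>

definition binary :: "'a set \<Rightarrow> ('a set \<Rightarrow> bool) \<Rightarrow> bool" where
  "binary E I \<longleftrightarrow> (\<exists>v :: 'a \<Rightarrow> nat \<Rightarrow> bool. \<forall>X. I X \<longleftrightarrow>
      X \<subseteq> E \<and> (\<forall>Y\<subseteq>X. Y \<noteq> {} \<longrightarrow> (\<exists>i. odd (card {y\<in>Y. v y i}))))"

definition rk :: "('a set \<Rightarrow> bool) \<Rightarrow> 'a set \<Rightarrow> nat" where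
  "rk I X = Max (card ` {Y. Y \<subseteq> X \<and> I Y})"

definition is_flat :: "'a set \<Rightarrow> ('a set \<Rightarrow> bool) \<Rightarrow> 'a set \<Rightarrow> bool" where
  "is_flat E I F \<longleftrightarrow> F \<subseteq> E \<and> (\<forall>x\<in>E - F. rk I (insert x F) > rk I F)"

definition circuit :: "'a set \<Rightarrow> ('a set \<Rightarrow> bool) \<Rightarrow> 'a set \<Rightarrow> bool" where
  "circuit E I C \<longleftrightarrow> C \<subseteq> E \<and> \<not> I C \<and> (\<forall>x\<in>C. I (C - {x}))"

definition basis :: "'a set \<Rightarrow> ('a set \<Rightarrow> bool) \<Rightarrow> 'a set \<Rightarrow> bool" where
  "basis E I B \<longleftrightarrow> I B \<and> (\<forall>x\<in>E - B. \<not> I (insert x B))"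

definition dual_indep :: "'a set \<Rightarrow> ('a set \<Rightarrow> bool) \<Rightarrow> 'a set \<Rightarrow> bool" where
  "dual_indep E I X \<longleftrightarrow> X \<subseteq> E \<and> (\<exists>B. basis E I B \<and> X \<inter> B = {})"

definition cocircuit :: "'a set \<Rightarrow> ('a set \<Rightarrow> bool) \<Rightarrow> 'a set \<Rightarrow> bool" where
  "cocircuit E I C \<longleftrightarrow> circuit E (dual_indep E I) C"

definition triangle :: "'a set \<Rightarrow> ('a set \<Rightarrow> bool) \<Rightarrow> 'a set \<Rightarrow> bool" where
  "triangle E I T \<longleftrightarrow> circuit E I T \<and> card T = 3"

definition delete_indep :: "('a set \<Rightarrow> bool) \<Rightarrow> 'a set \<Rightarrow> 'a set \<Rightarrow> bool" where
  "delete_indep I D X \<longleftrightarrow> I X \<and> X \<inter> D = {}"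

definition symdiff :: "'a set \<Rightarrow> 'a set \<Rightarrow> 'a set" where
  "symdiff A B = (A - B) \<union> (B - A)"

end

theory Submission
  imports Defs
begin

(* Cocircuits are complements of hyperplanes. Since T contains no cocircuit of M1 or M2, T lies in
   the closure of E1 - T and of E2 - T, and the hyperplanes of M = P \ T are the sets G - T for the
   hyperplanes G of P with G Int T inside the closure of G - T.

   The flats of P are glued from flats of M1 and M2 that agree on T. A hyperplane of a binary
   matroid meets every triangle, and this forces every hyperplane G of P to meet T. Then either G
   contains T and one side Ei and cuts a hyperplane out of the other side, or G meets T in a single
   point x and cuts hyperplanes out of both sides; complementing gives (i), and gluing hyperplanes
   of M1 and M2 back together gives (ii).

   For the symmetric difference of C1 and C2, the glued hyperplane H meets T in one point x. If x
   is spanned by H - T, the complement of H is a cocircuit of M. Otherwise H - T is a flat of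
   corank 2, and the hyperplanes above it are H and the closures Ga, Gb of H - T plus one of the
   other two points a, b of T. Ga and Gb cover E(M) and meet in H - T, so their complements are
   disjoint cocircuits R, Q of M whose union is the symmetric difference. *)

section \<open>Rank, closure and flats\<close>

definition matroid_cl :: "'a set \<Rightarrow> ('a set \<Rightarrow> bool) \<Rightarrow> 'a set \<Rightarrow> 'a set" where
  "matroid_cl E I X = {x\<in>E. rk I (insert x X) = rk I X}"

definition hyperplane :: "'a set \<Rightarrow> ('a set \<Rightarrow> bool) \<Rightarrow> 'a set \<Rightarrow> bool" where
  "hyperplane E I H \<longleftrightarrow> is_flat E I H \<and> Suc (rk I H) = rk I E"

locale finite_matroid =
  fixes E :: "'a set" and I :: "'a set \<Rightarrow> bool"
  assumes matroid: "matroid E I"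
begin

abbreviation cl :: "'a set \<Rightarrow> 'a set" where
  "cl X \<equiv> matroid_cl E I X"

lemma finite_ground: "finite E"
  and indep_empty: "I {}"
  and indep_subset_ground: "I X \<Longrightarrow> X \<subseteq> E"
  and indep_subset: "I X \<Longrightarrow> Y \<subseteq> X \<Longrightarrow> I Y"
  and indep_augment: "I X \<Longrightarrow> I Y \<Longrightarrow> card X < card Y \<Longrightarrow> \<exists>y\<in>Y - X. I (insert y X)"
  using matroid unfolding matroid_def by blast+

lemma indep_finite: "I X \<Longrightarrow> finite X"
  using finite_ground indep_subset_ground finite_subset by blast

lemma finite_indep_subsets: "finite {Y. Y \<subseteq> X \<and> I Y}"
  by (rule finite_subset[of _ "Pow E"]) (auto dest: indep_subset_ground simp: finite_ground)

lemma rk_witness: "\<exists>J. J \<subseteq> X \<and> I J \<and> card J = rk I X"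
proof -
  have "card ` {Y. Y \<subseteq> X \<and> I Y} \<noteq> {}" using indep_empty by auto
  hence "rk I X \<in> card ` {Y. Y \<subseteq> X \<and> I Y}"
    unfolding rk_def using Max_in finite_indep_subsets by blast
  thus ?thesis by auto
qed

lemma card_le_rk: "J \<subseteq> X \<Longrightarrow> I J \<Longrightarrow> card J \<le> rk I X"
  unfolding rk_def using finite_indep_subsets by (auto intro: Max_ge)

lemma rk_mono: "X \<subseteq> Y \<Longrightarrow> rk I X \<le> rk I Y"
  using rk_witness[of X] card_le_rk by (metis order_trans)

lemma rk_indep:
  assumes "I X" shows "rk I X = card X"
proof -
  obtain J where "J \<subseteq> X" "card J = rk I X" using rk_witness by blast
  hence "rk I X \<le> card X" using indep_finite[OF assms] card_mono by metis
  thus ?thesis using card_le_rk[of X X] assms by simp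
qed

lemma rk_insert_le: "rk I (insert x X) \<le> Suc (rk I X)"
proof -
  obtain J where J: "J \<subseteq> insert x X" "I J" "card J = rk I (insert x X)"
    using rk_witness by blast
  have "card (J - {x}) \<le> rk I X" using J indep_subset by (intro card_le_rk) auto
  moreover have "card J \<le> Suc (card (J - {x}))" using indep_finite[OF J(2)]
    by (cases "x \<in> J") (auto simp: card_Suc_Diff1)
  ultimately show ?thesis using J(3) by linarith
qed

lemma indep_extend:
  assumes "I J" "J \<subseteq> X"
  shows "\<exists>J'. J \<subseteq> J' \<and> J' \<subseteq> X \<and> I J' \<and> card J' = rk I X"
proof -
  let ?S = "{J'. J \<subseteq> J' \<and> J' \<subseteq> X \<and> I J'}"
  have fin: "finite ?S" by (rule finite_subset[OF _ finite_indep_subsets[of X]]) auto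
  have "Max (card ` ?S) \<in> card ` ?S" using fin assms by (intro Max_in) auto
  then obtain J' where J': "J' \<in> ?S" "card J' = Max (card ` ?S)" by auto
  have max: "card K \<le> card J'" if "K \<in> ?S" for K
    using fin that unfolding J'(2) by (intro Max_ge) auto
  have "card J' = rk I X"
  proof (rule ccontr)
    assume "card J' \<noteq> rk I X"
    hence "card J' < rk I X" using card_le_rk[of J' X] J' by auto
    moreover obtain Y where "Y \<subseteq> X" "I Y" "card Y = rk I X" using rk_witness by blast
    ultimately obtain y where y: "y \<in> Y - J'" "I (insert y J')" "y \<in> X"
      using indep_augment[of J' Y] J' by auto
    hence "card (insert y J') \<le> card J'" using J' by (intro max) auto
    thus False using y indep_finite[OF y(2)] by auto
  qed
  thus ?thesis using J' by auto
qed

lemma rk_insert_eq_mono: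
  assumes "X \<subseteq> Y" "rk I (insert x X) = rk I X"
  shows "rk I (insert x Y) = rk I Y"
proof (rule ccontr)
  assume "rk I (insert x Y) \<noteq> rk I Y"
  moreover have "rk I Y \<le> rk I (insert x Y)" by (rule rk_mono) auto
  ultimately have lt: "rk I Y < rk I (insert x Y)" by auto
  obtain JX where JX: "JX \<subseteq> X" "I JX" "card JX = rk I X" using rk_witness by blast
  obtain JY where JY: "JX \<subseteq> JY" "JY \<subseteq> Y" "I JY" "card JY = rk I Y"
    using indep_extend[of JX Y] JX assms(1) by blast
  obtain K where K: "K \<subseteq> insert x Y" "I K" "card K = rk I (insert x Y)" using rk_witness by blast
  obtain z where z: "z \<in> K - JY" "I (insert z JY)"
    using indep_augment[OF JY(3) K(2)] lt JY(4) K(3) by auto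
  have card_z: "card (insert z JY) = Suc (card JY)" using z indep_finite[OF JY(3)] by auto
  show False
  proof (cases "z \<in> Y")
    case True
    hence "card (insert z JY) \<le> rk I Y" using JY z by (intro card_le_rk) auto
    thus False using card_z JY(4) by auto
  next
    case False
    hence "z = x" using z K by auto
    hence "I (insert x JX)" "x \<notin> JX"
      using z JY(1) indep_subset[OF z(2), of "insert x JX"] by auto
    hence "Suc (card JX) \<le> rk I (insert x X)"
      using JX card_le_rk[of "insert x JX" "insert x X"] indep_finite[OF JX(2)] by auto
    thus False using JX(3) assms(2) by auto
  qed
qed

lemma mem_cl_iff: "x \<in> cl X \<longleftrightarrow> x \<in> E \<and> rk I (insert x X) = rk I X"
  by (simp add: matroid_cl_def)

lemma cl_subset_ground: "cl X \<subseteq> E"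
  by (auto simp: matroid_cl_def)

lemma subset_cl: "X \<subseteq> E \<Longrightarrow> X \<subseteq> cl X"
  by (auto simp: matroid_cl_def insert_absorb)

lemma cl_mono: "X \<subseteq> Y \<Longrightarrow> cl X \<subseteq> cl Y"
  by (auto simp: matroid_cl_def intro: rk_insert_eq_mono)

lemma rk_insert_not_cl:
  assumes "x \<in> E - cl X" shows "rk I (insert x X) = Suc (rk I X)"
proof -
  have "rk I X \<le> rk I (insert x X)" by (rule rk_mono) auto
  moreover have "rk I (insert x X) \<noteq> rk I X" using assms mem_cl_iff by auto
  ultimately show ?thesis using rk_insert_le[of x X] by linarith
qed

lemma flat_iff_cl: "is_flat E I F \<longleftrightarrow> F \<subseteq> E \<and> (\<forall>x\<in>E - F. x \<notin> cl F)"
proof -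
  have "rk I F \<le> rk I (insert x F)" for x by (rule rk_mono) auto
  hence "rk I F < rk I (insert x F) \<longleftrightarrow> rk I (insert x F) \<noteq> rk I F" for x
    by (metis le_neq_implies_less less_irrefl)
  thus ?thesis unfolding is_flat_def mem_cl_iff by auto
qed

lemma flat_subset_ground: "is_flat E I F \<Longrightarrow> F \<subseteq> E"
  by (simp add: is_flat_def)

lemma flat_ground: "is_flat E I E"
  by (simp add: is_flat_def)

lemma rk_cl: "X \<subseteq> E \<Longrightarrow> rk I (cl X) = rk I X"
proof -
  have "rk I (X \<union> Y) = rk I X" if "finite Y" "Y \<subseteq> cl X" for Y
    using that
  proof (induction Y rule: finite_induct)
    case (insert y Y)
    thus ?case using rk_insert_eq_mono[of X "X \<union> Y" y] mem_cl_iff by auto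
  qed simp
  moreover assume "X \<subseteq> E"
  hence "X \<union> cl X = cl X" using subset_cl by auto
  moreover have "finite (cl X)" using finite_subset[OF cl_subset_ground finite_ground] .
  ultimately show ?thesis by (metis subset_refl)
qed

lemma cl_subset_flat: "is_flat E I F \<Longrightarrow> X \<subseteq> F \<Longrightarrow> cl X \<subseteq> F"
  unfolding flat_iff_cl using cl_mono cl_subset_ground by blast

lemma flat_cl: "X \<subseteq> E \<Longrightarrow> is_flat E I (cl X)"
  unfolding flat_iff_cl
proof (intro conjI ballI cl_subset_ground notI)
  fix x assume X: "X \<subseteq> E" and x: "x \<in> E - cl X" "x \<in> cl (cl X)"
  have "rk I (insert x (cl X)) = rk I X" using x rk_cl[OF X] mem_cl_iff by auto
  moreover have "rk I (insert x X) \<le> rk I (insert x (cl X))"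
    using subset_cl[OF X] by (intro rk_mono) auto
  ultimately show False using rk_insert_not_cl[of x X] x by linarith
qed

lemma rk_flat_less:
  assumes "is_flat E I F" "is_flat E I G" "F \<subset> G"
  shows "rk I F < rk I G"
proof -
  obtain x where x: "x \<in> G - F" using assms(3) by auto
  hence "rk I F < rk I (insert x F)" using assms unfolding is_flat_def by auto
  also have "\<dots> \<le> rk I G" using x assms(3) by (intro rk_mono) auto
  finally show ?thesis .
qed

lemma flat_Int: "is_flat E I F \<Longrightarrow> is_flat E I G \<Longrightarrow> is_flat E I (F \<inter> G)"
  unfolding flat_iff_cl using cl_mono[of "F \<inter> G" F] cl_mono[of "F \<inter> G" G] by blast

lemma mem_flat_of_circuit:
  assumes C: "circuit E I C" "x \<in> C" and F: "is_flat E I F" "C - {x} \<subseteq> F"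
  shows "x \<in> F"
proof -
  have C': "C \<subseteq> E" "\<not> I C" "I (C - {x})" using C unfolding circuit_def by auto
  have fin: "finite C" using C' finite_ground finite_subset by blast
  obtain J where J: "J \<subseteq> C" "I J" "card J = rk I C" using rk_witness by blast
  have "J \<noteq> C" using J C' by auto
  hence "card J < card C" using J fin by (meson psubset_card_mono psubsetI)
  hence "rk I C \<le> rk I (C - {x})" using J rk_indep[OF C'(3)] C(2) fin by simp
  moreover have "rk I (C - {x}) \<le> rk I C" by (rule rk_mono) auto
  moreover have "insert x (C - {x}) = C" using C(2) by auto
  ultimately have "x \<in> cl (C - {x})" using C' C(2) mem_cl_iff by auto
  thus ?thesis using cl_subset_flat[OF F] by auto
qed

lemma cl_flat_eq: "is_flat E I F \<Longrightarrow> cl F = F"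
  using cl_subset_flat[of F F] subset_cl flat_subset_ground by blast

lemma flat_eq_ground_of_rk:
  assumes "is_flat E I F" "rk I F = rk I E" shows "F = E"
  using rk_flat_less[OF assms(1) flat_ground] flat_subset_ground[OF assms(1)] assms(2)
  by (metis less_irrefl psubsetI)

lemma flat_between:
  assumes "is_flat E I F" "is_flat E I Z" "is_flat E I G" "F \<subseteq> Z" "Z \<subseteq> G"
    and "rk I G = Suc (rk I F)"
  shows "Z = F \<or> Z = G"
  using rk_flat_less[of F Z] rk_flat_less[of Z G] assms by fastforce

lemma indep_insert_iff:
  assumes "I J" "x \<in> E - J"
  shows "I (insert x J) \<longleftrightarrow> x \<notin> cl J"
proof
  assume "I (insert x J)"
  thus "x \<notin> cl J"
    using assms rk_indep indep_finite mem_cl_iff by fastforce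
next
  assume "x \<notin> cl J"
  hence "rk I (insert x J) = card (insert x J)"
    using assms rk_insert_not_cl[of x J] rk_indep indep_finite by fastforce
  then obtain K where "K \<subseteq> insert x J" "I K" "card K = card (insert x J)"
    using rk_witness by metis
  thus "I (insert x J)" using card_subset_eq indep_finite[OF assms(1)] by (metis finite_insert)
qed

lemma cl_eq_of_rk_eq:
  assumes "J \<subseteq> X" "X \<subseteq> E" "rk I J = rk I X"
  shows "cl X = cl J"
proof
  have "X \<subseteq> cl J"
  proof
    fix w assume "w \<in> X"
    hence "rk I J \<le> rk I (insert w J)" "rk I (insert w J) \<le> rk I X"
      using assms(1) by (auto intro: rk_mono)
    thus "w \<in> cl J" using assms \<open>w \<in> X\<close> mem_cl_iff by auto
  qed
  thus "cl X \<subseteq> cl J" using cl_subset_flat[OF flat_cl] assms by blast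
  show "cl J \<subseteq> cl X" using cl_mono[OF assms(1)] .
qed

section \<open>Hyperplanes and cocircuits\<close>

lemma basis_card: "basis E I B \<Longrightarrow> card B = rk I E"
  using rk_witness[of E] card_le_rk[of B E] indep_augment[of B] indep_subset_ground
  unfolding basis_def by (metis Diff_iff less_le subsetD)

lemma dual_indep_iff: "dual_indep E I X \<longleftrightarrow> X \<subseteq> E \<and> rk I (E - X) = rk I E"
proof
  assume "dual_indep E I X"
  then obtain B where B: "X \<subseteq> E" "basis E I B" "X \<inter> B = {}" unfolding dual_indep_def by auto
  have "B \<subseteq> E - X" using B indep_subset_ground unfolding basis_def by auto
  hence "rk I E \<le> rk I (E - X)" using card_le_rk basis_card[OF B(2)] B(2) unfolding basis_def by metis
  thus "X \<subseteq> E \<and> rk I (E - X) = rk I E" using B(1) rk_mono[of "E - X" E] by auto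
next
  assume X: "X \<subseteq> E \<and> rk I (E - X) = rk I E"
  obtain J where J: "J \<subseteq> E - X" "I J" "card J = rk I (E - X)" using rk_witness by blast
  have "basis E I J"
    unfolding basis_def
  proof (intro conjI ballI notI J(2))
    fix x assume x: "x \<in> E - J" "I (insert x J)"
    hence "card (insert x J) \<le> rk I E" using J by (intro card_le_rk) auto
    thus False using x J X indep_finite[OF J(2)] by auto
  qed
  thus "dual_indep E I X" unfolding dual_indep_def using X J by auto
qed

lemma cocircuit_iff_hyperplane:
  assumes C: "C \<subseteq> E"
  shows "cocircuit E I C \<longleftrightarrow> hyperplane E I (E - C)"
proof -
  have E_minus: "E - (C - {x}) = insert x (E - C)" if "x \<in> C" for x
    using C that by auto
  have rk_le: "rk I X \<le> rk I E" if "X \<subseteq> E" for X using rk_mono that .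
  have "cocircuit E I C \<longleftrightarrow>
          rk I (E - C) < rk I E \<and> (\<forall>x\<in>C. rk I (insert x (E - C)) = rk I E)"
    unfolding cocircuit_def circuit_def dual_indep_iff using C E_minus rk_le[of "E - C"]
    by (auto simp: le_less)
  also have "\<dots> \<longleftrightarrow> hyperplane E I (E - C)"
  proof
    assume A: "rk I (E - C) < rk I E \<and> (\<forall>x\<in>C. rk I (insert x (E - C)) = rk I E)"
    then obtain x where "x \<in> C" by fastforce
    hence "rk I E \<le> Suc (rk I (E - C))" using A rk_insert_le[of x "E - C"] by auto
    moreover have "is_flat E I (E - C)" unfolding is_flat_def using A C by auto
    ultimately show "hyperplane E I (E - C)" unfolding hyperplane_def using A by auto
  next
    assume H: "hyperplane E I (E - C)"
    have "rk I (E - C) < rk I (insert x (E - C))" if "x \<in> C" for x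
      using H C that unfolding hyperplane_def is_flat_def by auto
    moreover have "rk I (insert x (E - C)) \<le> rk I E" if "x \<in> C" for x
      using C that by (intro rk_le) auto
    ultimately show "rk I (E - C) < rk I E \<and> (\<forall>x\<in>C. rk I (insert x (E - C)) = rk I E)"
      using H unfolding hyperplane_def by fastforce
  qed
  finally show ?thesis .
qed

lemma hyperplane_subset_ground: "hyperplane E I H \<Longrightarrow> H \<subseteq> E"
  unfolding hyperplane_def is_flat_def by auto

lemma cocircuit_compl_hyperplane: "hyperplane E I H \<Longrightarrow> cocircuit E I (E - H)"
  using cocircuit_iff_hyperplane[of "E - H"] hyperplane_subset_ground by (simp add: double_diff)

lemma hyperplane_eq: "hyperplane E I F \<Longrightarrow> hyperplane E I G \<Longrightarrow> F \<subseteq> G \<Longrightarrow> F = G"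
  using rk_flat_less[of F G] unfolding hyperplane_def by fastforce

lemma hyperplane_iff_coatom:
  "hyperplane E I H \<longleftrightarrow>
     is_flat E I H \<and> H \<noteq> E \<and> (\<forall>G. is_flat E I G \<and> H \<subseteq> G \<longrightarrow> G = H \<or> G = E)"
proof
  assume H: "hyperplane E I H"
  have "G = E" if "is_flat E I G" "H \<subset> G" for G
  proof -
    have "rk I H < rk I G" using rk_flat_less that H unfolding hyperplane_def by blast
    moreover have "rk I G \<le> rk I E" using rk_mono[OF flat_subset_ground[OF that(1)]] .
    ultimately show ?thesis using flat_eq_ground_of_rk[OF that(1)] H unfolding hyperplane_def by simp
  qed
  moreover have "H \<noteq> E" using H unfolding hyperplane_def by auto
  ultimately show "is_flat E I H \<and> H \<noteq> E \<and> (\<forall>G. is_flat E I G \<and> H \<subseteq> G \<longrightarrow> G = H \<or> G = E)"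
    using H unfolding hyperplane_def by blast
next
  assume A: "is_flat E I H \<and> H \<noteq> E \<and> (\<forall>G. is_flat E I G \<and> H \<subseteq> G \<longrightarrow> G = H \<or> G = E)"
  then obtain x where x: "x \<in> E - H" using flat_subset_ground by blast
  have sub: "insert x H \<subseteq> E" using x A flat_subset_ground by blast
  have "insert x H \<subseteq> cl (insert x H)" using subset_cl[OF sub] .
  hence "cl (insert x H) = E" using A x flat_cl[OF sub] by blast
  hence "rk I E = Suc (rk I H)"
    using rk_cl[OF sub] rk_insert_not_cl[of x H] x cl_flat_eq A by auto
  thus "hyperplane E I H" unfolding hyperplane_def using A by auto
qed

lemma cl_insert_hyperplane_eq_ground:
  assumes "hyperplane E I H" "x \<in> E - H"
  shows "cl (insert x H) = E"
proof -
  have "insert x H \<subseteq> E" using assms hyperplane_subset_ground by blast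
  moreover have "rk I (insert x H) = rk I E"
    using assms rk_insert_not_cl[of x H] cl_flat_eq unfolding hyperplane_def by auto
  ultimately show ?thesis using flat_eq_ground_of_rk flat_cl rk_cl by metis
qed

lemma cl_insert_ne_ground:
  assumes F: "is_flat E I F" "F \<noteq> E" "\<not> hyperplane E I F" and x: "x \<in> E"
  shows "cl (insert x F) \<noteq> E"
proof -
  have "rk I F < rk I E" using rk_flat_less[OF F(1) flat_ground] F flat_subset_ground by blast
  hence "Suc (rk I F) < rk I E" using F unfolding hyperplane_def by auto
  moreover have "rk I (cl (insert x F)) \<le> Suc (rk I F)"
    using rk_cl[of "insert x F"] rk_insert_le[of x F] x F flat_subset_ground by auto
  ultimately show ?thesis by auto
qed

lemma hyperplane_exists:
  "is_flat E I F \<Longrightarrow> F \<noteq> E \<Longrightarrow> \<exists>H. hyperplane E I H \<and> F \<subseteq> H"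
proof (induction "rk I E - rk I F" arbitrary: F rule: less_induct)
  case less
  show ?case
  proof (cases "hyperplane E I F")
    case False
    obtain x where x: "x \<in> E - F" using less.prems flat_subset_ground by blast
    have sub: "insert x F \<subseteq> E" using x less.prems flat_subset_ground by blast
    have "rk I (cl (insert x F)) = Suc (rk I F)"
      using rk_cl[OF sub] rk_insert_not_cl[of x F] x cl_flat_eq less.prems by auto
    moreover have "rk I (cl (insert x F)) \<le> rk I E" by (rule rk_mono[OF cl_subset_ground])
    ultimately obtain H where "hyperplane E I H" "cl (insert x F) \<subseteq> H"
      using less.hyps[OF _ flat_cl[OF sub] cl_insert_ne_ground[OF less.prems False]] x by fastforce
    thus ?thesis using subset_cl[OF sub] by auto
  qed auto
qed

lemma hyperplane_cl_insert_corank2: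
  assumes K: "is_flat E I K" "rk I E = Suc (Suc (rk I K))" and y: "y \<in> E - K"
  shows "hyperplane E I (cl (insert y K))"
proof -
  have "insert y K \<subseteq> E" using K y flat_subset_ground by blast
  thus ?thesis
    unfolding hyperplane_def using rk_cl rk_insert_not_cl[of y K] y K cl_flat_eq flat_cl by auto
qed

lemma flat_Int_triangle:
  assumes T: "triangle E I T" and F: "is_flat E I F"
  shows "F \<inter> T = {} \<or> (\<exists>x. F \<inter> T = {x}) \<or> T \<subseteq> F"
proof (rule ccontr)
  assume A: "\<not> ?thesis"
  then obtain x y z where xyz: "x \<in> F \<inter> T" "y \<in> F \<inter> T" "x \<noteq> y" "z \<in> T - F" by blast
  have C: "circuit E I T" "card T = 3" using T unfolding triangle_def by auto
  hence "finite T" by (metis card.infinite zero_neq_numeral)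
  moreover have "card {x, y, z} = 3" using xyz by (auto simp: card_insert_if)
  ultimately have "T = {x, y, z}" using card_seteq[of T "{x, y, z}"] C xyz by auto
  hence "T - {z} \<subseteq> F" using xyz by auto
  thus False using mem_flat_of_circuit[OF C(1) _ F] xyz by blast
qed

lemma flat_eq_ground_of_no_cocircuit:
  assumes "\<forall>C. C \<subseteq> D \<longrightarrow> \<not> cocircuit E I C" and "is_flat E I F" "E - D \<subseteq> F"
  shows "F = E"
proof (rule ccontr)
  assume "F \<noteq> E"
  then obtain H where H: "hyperplane E I H" "F \<subseteq> H" using hyperplane_exists assms(2) by blast
  have "cocircuit E I (E - H)" using H(1) by (rule cocircuit_compl_hyperplane)
  moreover have "E - H \<subseteq> D" using H assms(3) by auto
  ultimately show False using assms(1) by blast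
qed

lemma matroid_delete: "matroid (E - D) (delete_indep I D)"
  unfolding matroid_def delete_indep_def
proof (intro conjI allI impI)
  fix X Y assume "(I X \<and> X \<inter> D = {}) \<and> (I Y \<and> Y \<inter> D = {}) \<and> card X < card Y"
  thus "\<exists>y\<in>Y - X. I (insert y X) \<and> insert y X \<inter> D = {}" using indep_augment by fastforce
qed (use finite_ground indep_empty indep_subset_ground indep_subset in blast)+

lemma rk_delete:
  assumes "X \<inter> D = {}" shows "rk (delete_indep I D) X = rk I X"
proof -
  have "{Y. Y \<subseteq> X \<and> delete_indep I D Y} = {Y. Y \<subseteq> X \<and> I Y}"
    using assms unfolding delete_indep_def by blast
  thus ?thesis unfolding rk_def by simp
qed

lemma hyperplane_delete_iff:
  assumes full: "rk I (E - D) = rk I E" and K: "K \<subseteq> E - D"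
  shows "hyperplane (E - D) (delete_indep I D) K \<longleftrightarrow> hyperplane E I (cl K) \<and> cl K - D = K"
proof -
  let ?r = "rk (delete_indep I D)"
  have r: "?r X = rk I X" if "X \<subseteq> E - D" for X using rk_delete that by blast
  have KE: "K \<subseteq> E" using K by auto
  have rank: "Suc (?r K) = ?r (E - D) \<longleftrightarrow> Suc (rk I (cl K)) = rk I E"
    using r[OF K] r[of "E - D"] full rk_cl[OF KE] by auto
  have "?r K < ?r (insert x K) \<longleftrightarrow> x \<notin> cl K" if "x \<in> E - D - K" for x
  proof -
    have "insert x K \<subseteq> E - D" using that K by auto
    hence "?r K < ?r (insert x K) \<longleftrightarrow> rk I K < rk I (insert x K)" using r[OF K] r by presburger
    thus ?thesis using that rk_insert_not_cl[of x K] mem_cl_iff by auto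
  qed
  hence "is_flat (E - D) (delete_indep I D) K \<longleftrightarrow> (\<forall>x\<in>E - D - K. x \<notin> cl K)"
    unfolding is_flat_def using K by blast
  hence flat: "is_flat (E - D) (delete_indep I D) K \<longleftrightarrow> cl K - D = K"
    using subset_cl[OF KE] K cl_subset_ground by blast
  show ?thesis unfolding hyperplane_def using rank flat flat_cl[OF KE] by blast
qed

end

section \<open>Binary matroids\<close>

definition gf2_sum :: "('a \<Rightarrow> nat \<Rightarrow> bool) \<Rightarrow> 'a set \<Rightarrow> nat \<Rightarrow> bool" where
  "gf2_sum v Y = (\<lambda>i. odd (card {y\<in>Y. v y i}))"

lemma gf2_sum_symdiff:
  assumes "finite A" "finite B"
  shows "gf2_sum v (symdiff A B) = (\<lambda>i. gf2_sum v A i \<noteq> gf2_sum v B i)"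
proof
  fix i
  let ?A = "{y\<in>A. v y i}" and ?B = "{y\<in>B. v y i}"
  have fin: "finite ?A" "finite ?B" using assms by auto
  have "{y \<in> symdiff A B. v y i} = (?A \<union> ?B) - (?A \<inter> ?B)" unfolding symdiff_def by auto
  moreover have "card ((?A \<union> ?B) - (?A \<inter> ?B)) = card (?A \<union> ?B) - card (?A \<inter> ?B)"
    using fin by (intro card_Diff_subset) auto
  moreover have "card (?A \<inter> ?B) \<le> card (?A \<union> ?B)" using fin by (intro card_mono) auto
  ultimately have "card {y \<in> symdiff A B. v y i} + 2 * card (?A \<inter> ?B) = card ?A + card ?B"
    using card_Un_Int[OF fin] by simp
  thus "gf2_sum v (symdiff A B) i = (gf2_sum v A i \<noteq> gf2_sum v B i)"
    unfolding gf2_sum_def by presburger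
qed

lemma gf2_sum_insert:
  assumes "finite Y" "x \<notin> Y"
  shows "gf2_sum v (insert x Y) = (\<lambda>i. gf2_sum v Y i \<noteq> v x i)"
proof
  fix i
  have "{y \<in> insert x Y. v y i} = (if v x i then insert x {y\<in>Y. v y i} else {y\<in>Y. v y i})"
    by auto
  thus "gf2_sum v (insert x Y) i = (gf2_sum v Y i \<noteq> v x i)" using assms by (simp add: gf2_sum_def)
qed

lemma gf2_sum_empty: "gf2_sum v {} = (\<lambda>i. False)"
  by (simp add: gf2_sum_def)

lemma gf2_sum_singleton: "gf2_sum v {x} = v x"
  using gf2_sum_insert[of "{}" x v] by (simp add: gf2_sum_empty)

lemma gf2_sum_in_subset_sums:
  assumes "finite J" "finite W" "\<forall>w\<in>W. v w \<in> gf2_sum v ` Pow J"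
  shows "gf2_sum v W \<in> gf2_sum v ` Pow J"
  using assms(2,3)
proof (induction W rule: finite_induct)
  case empty
  have "gf2_sum v {} = gf2_sum v {}" ..
  thus ?case by blast
next
  case (insert w W)
  obtain Z1 Z2 where "Z1 \<subseteq> J" "gf2_sum v Z1 = gf2_sum v W" "Z2 \<subseteq> J" "gf2_sum v Z2 = v w"
    using insert by auto
  moreover have "finite Z1" "finite Z2"
    using finite_subset[OF \<open>Z1 \<subseteq> J\<close> assms(1)] finite_subset[OF \<open>Z2 \<subseteq> J\<close> assms(1)] .
  ultimately have "gf2_sum v (symdiff Z1 Z2) = gf2_sum v (insert w W)"
    using gf2_sum_symdiff[of Z1 Z2 v] gf2_sum_insert[OF insert.hyps(1,2)] by simp
  moreover have "symdiff Z1 Z2 \<subseteq> J" using \<open>Z1 \<subseteq> J\<close> \<open>Z2 \<subseteq> J\<close> unfolding symdiff_def by auto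
  ultimately show ?case by (metis PowI image_eqI)
qed

locale binary_matroid = finite_matroid +
  fixes v :: "'a \<Rightarrow> nat \<Rightarrow> bool"
  assumes indep_iff: "I X \<longleftrightarrow> X \<subseteq> E \<and> (\<forall>Y\<subseteq>X. Y \<noteq> {} \<longrightarrow> gf2_sum v Y \<noteq> (\<lambda>i. False))"
begin

lemma cl_iff_sum_of_indep:
  assumes J: "I J" and x: "x \<in> E - J"
  shows "x \<in> cl J \<longleftrightarrow> v x \<in> gf2_sum v ` Pow J"
proof -
  have fin: "finite J" using indep_finite[OF J] .
  have sum_insert: "gf2_sum v (insert x W) = (\<lambda>i. gf2_sum v W i \<noteq> v x i)" if "W \<subseteq> J" for W
    using gf2_sum_insert[OF finite_subset[OF that fin], of x] x that by blast
  have "\<not> I (insert x J) \<longleftrightarrow> (\<exists>W\<subseteq>J. gf2_sum v W = v x)"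
  proof
    assume "\<not> I (insert x J)"
    moreover have "insert x J \<subseteq> E" using x indep_subset_ground[OF J] by blast
    ultimately obtain Y where Y: "Y \<subseteq> insert x J" "Y \<noteq> {}" "gf2_sum v Y = (\<lambda>i. False)"
      using indep_iff[of "insert x J"] by blast
    have "x \<in> Y" using Y J indep_iff[of J] by blast
    hence "insert x (Y - {x}) = Y" by blast
    hence "gf2_sum v Y = (\<lambda>i. gf2_sum v (Y - {x}) i \<noteq> v x i)"
      using sum_insert[of "Y - {x}"] Y(1) by force
    hence "gf2_sum v (Y - {x}) = v x" using Y(3) by (simp add: fun_eq_iff)
    thus "\<exists>W\<subseteq>J. gf2_sum v W = v x" using Y(1) by blast
  next
    assume "\<exists>W\<subseteq>J. gf2_sum v W = v x"
    then obtain W where W: "W \<subseteq> J" "gf2_sum v W = v x" by blast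
    hence "gf2_sum v (insert x W) = (\<lambda>i. False)" using sum_insert[OF W(1)] by simp
    moreover have "insert x W \<subseteq> insert x J" using W(1) by blast
    ultimately show "\<not> I (insert x J)" using indep_iff[of "insert x J"] by blast
  qed
  moreover have "x \<in> cl J \<longleftrightarrow> \<not> I (insert x J)" using indep_insert_iff[OF J x] by simp
  ultimately show ?thesis unfolding image_iff Bex_def Pow_iff by (metis (no_types))
qed

lemma cl_iff_sum:
  assumes X: "X \<subseteq> E" and x: "x \<in> E"
  shows "x \<in> cl X \<longleftrightarrow> v x \<in> gf2_sum v ` Pow X"
proof -
  obtain J where J: "J \<subseteq> X" "I J" "card J = rk I X" using rk_witness by blast
  have clJ: "cl X = cl J" using cl_eq_of_rk_eq J X rk_indep by metis
  have fin: "finite J" using indep_finite[OF J(2)] .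
  have span: "v w \<in> gf2_sum v ` Pow J" if "w \<in> cl J" for w
  proof (cases "w \<in> J")
    case True
    have "v w = gf2_sum v {w}" by (rule gf2_sum_singleton[symmetric])
    thus ?thesis using True by blast
  next
    case False
    thus ?thesis using that cl_iff_sum_of_indep[OF J(2)] cl_subset_ground by blast
  qed
  have "gf2_sum v ` Pow X \<subseteq> gf2_sum v ` Pow J"
  proof
    fix s assume "s \<in> gf2_sum v ` Pow X"
    then obtain W where "W \<subseteq> X" "s = gf2_sum v W" by blast
    moreover have "\<forall>w\<in>W. v w \<in> gf2_sum v ` Pow J"
      using calculation(1) subset_cl[OF X] clJ span by blast
    moreover have "finite W" by (rule finite_subset[OF _ finite_ground]) (use calculation(1) X in blast)
    ultimately show "s \<in> gf2_sum v ` Pow J" using gf2_sum_in_subset_sums[OF fin] by simp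
  qed
  moreover have "gf2_sum v ` Pow J \<subseteq> gf2_sum v ` Pow X" using J(1) by blast
  ultimately have sums: "gf2_sum v ` Pow X = gf2_sum v ` Pow J" by (rule subset_antisym)
  show ?thesis
  proof (cases "x \<in> J")
    case True
    hence "x \<in> cl J" using subset_cl J(1) X by blast
    thus ?thesis using span clJ sums by simp
  next
    case False
    thus ?thesis using cl_iff_sum_of_indep[OF J(2)] x clJ sums by simp
  qed
qed

lemma circuit_sum:
  assumes "circuit E I C" shows "gf2_sum v C = (\<lambda>i. False)"
proof -
  have C: "C \<subseteq> E" "\<not> I C" "\<And>x. x \<in> C \<Longrightarrow> I (C - {x})"
    using assms unfolding circuit_def by auto
  then obtain Y where Y: "Y \<subseteq> C" "Y \<noteq> {}" "gf2_sum v Y = (\<lambda>i. False)" using indep_iff by auto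
  have "Y = C"
  proof (rule ccontr)
    assume "Y \<noteq> C"
    then obtain z where "z \<in> C" "Y \<subseteq> C - {z}" using Y by blast
    thus False using C(3)[of z] indep_iff[of "C - {z}"] Y by blast
  qed
  thus ?thesis using Y by simp
qed

lemma hyperplane_meets_triangle:
  assumes T: "triangle E I T" and H: "hyperplane E I H"
  shows "H \<inter> T \<noteq> {}"
proof
  assume disj: "H \<inter> T = {}"
  obtain t a b where tab: "T = {t, a, b}" "t \<noteq> a" "a \<noteq> b" "t \<noteq> b"
    using T unfolding triangle_def card_3_iff by blast
  have TE: "T \<subseteq> E" using T unfolding triangle_def circuit_def by auto
  have HE: "H \<subseteq> E" using hyperplane_subset_ground[OF H] .
  have not_cl: "y \<notin> cl H" if "y \<in> T" for y
    using that disj TE H cl_flat_eq unfolding hyperplane_def by auto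
  have "gf2_sum v T = (\<lambda>i. gf2_sum v {a, b} i \<noteq> v t i)"
    using tab gf2_sum_insert[of "{a, b}" t] by simp
  moreover have "gf2_sum v {a, b} = (\<lambda>i. v b i \<noteq> v a i)"
    using tab gf2_sum_insert[of "{b}" a] unfolding gf2_sum_singleton by simp
  ultimately have vt: "v t = (\<lambda>i. v a i \<noteq> v b i)"
    using circuit_sum T unfolding triangle_def by (auto simp: fun_eq_iff)
  (* a and b are spanned by H plus t but not by H; adding their representations over H plus t
     expresses v t over H alone. *)
  have tH: "insert t H \<subseteq> E" and cl_tH: "cl (insert t H) = E"
    using cl_insert_hyperplane_eq_ground[OF H] tab TE disj HE by auto
  have through_t: "\<exists>W\<subseteq>insert t H. t \<in> W \<and> gf2_sum v W = v y" if y: "y \<in> T" for y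
  proof -
    have "y \<in> cl (insert t H)" using cl_tH y TE by auto
    hence "v y \<in> gf2_sum v ` Pow (insert t H)" using cl_iff_sum[OF tH] y TE by blast
    then obtain W where W: "W \<subseteq> insert t H" "gf2_sum v W = v y" by auto
    have "t \<in> W"
    proof (rule ccontr)
      assume "t \<notin> W"
      hence "W \<in> Pow H" using W by auto
      hence "v y \<in> gf2_sum v ` Pow H" using W(2) by (metis image_eqI)
      thus False using cl_iff_sum[OF HE] not_cl y TE by blast
    qed
    thus ?thesis using W by blast
  qed
  obtain Wa where Wa: "Wa \<subseteq> insert t H" "t \<in> Wa" "gf2_sum v Wa = v a"
    using through_t[of a] tab by auto
  obtain Wb where Wb: "Wb \<subseteq> insert t H" "t \<in> Wb" "gf2_sum v Wb = v b"
    using through_t[of b] tab by auto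
  have "finite (insert t H)" using finite_subset[OF tH finite_ground] .
  hence "finite Wa" "finite Wb" using finite_subset[OF Wa(1)] finite_subset[OF Wb(1)] by auto
  hence "gf2_sum v (symdiff Wa Wb) = v t" using gf2_sum_symdiff[of Wa Wb v] Wa(3) Wb(3) vt by simp
  moreover have "symdiff Wa Wb \<in> Pow H" using Wa Wb unfolding symdiff_def by auto
  ultimately have "v t \<in> gf2_sum v ` Pow H" by (metis image_eqI)
  hence "t \<in> cl H" using cl_iff_sum[OF HE, of t] TE tab by simp
  thus False using not_cl tab by auto
qed

end

lemma binary_hyperplane_meets_triangle:
  assumes "matroid E I" "binary E I" "triangle E I T" "hyperplane E I H"
  shows "H \<inter> T \<noteq> {}"
proof -
  obtain v :: "'a \<Rightarrow> nat \<Rightarrow> bool" where v: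
    "\<And>X. I X \<longleftrightarrow> X \<subseteq> E \<and> (\<forall>Y\<subseteq>X. Y \<noteq> {} \<longrightarrow> (\<exists>i. odd (card {y\<in>Y. v y i})))"
    using assms(2) unfolding binary_def by (rule exE) blast
  have "gf2_sum v Y \<noteq> (\<lambda>i. False) \<longleftrightarrow> (\<exists>i. odd (card {y\<in>Y. v y i}))" for Y
    unfolding gf2_sum_def fun_eq_iff by simp
  with v assms(1) interpret binary_matroid E I v by unfold_locales simp_all
  show ?thesis using hyperplane_meets_triangle assms(3,4) .
qed

lemma (in finite_matroid) binary_cl_insert_triangle:
  assumes bin: "binary E I" and T: "triangle E I T"
    and F: "is_flat E I F" "F \<inter> T = {}" and t: "t \<in> T"
  shows "cl (insert t F) \<noteq> E" and "cl (insert t F) \<inter> T = {t} \<or> T \<subseteq> cl (insert t F)"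
proof -
  have TE: "T \<subseteq> E" using T unfolding triangle_def circuit_def by blast
  have sub: "insert t F \<subseteq> E" using TE t flat_subset_ground[OF F(1)] by blast
  have "\<not> hyperplane E I F" using binary_hyperplane_meets_triangle[OF matroid bin T] F(2) by blast
  moreover have "F \<noteq> E" using F(2) TE t by blast
  ultimately show "cl (insert t F) \<noteq> E" using cl_insert_ne_ground[OF F(1)] TE t by blast
  have "t \<in> cl (insert t F)" using subset_cl[OF sub] by blast
  thus "cl (insert t F) \<inter> T = {t} \<or> T \<subseteq> cl (insert t F)"
    using flat_Int_triangle[OF T flat_cl[OF sub]] t by (metis IntI empty_iff singletonD)
qed

section \<open>The generalized parallel connection across a triangle\<close>

locale three_sum =
  fixes E1 E2 T :: "'a set" and I1 I2 IP :: "'a set \<Rightarrow> bool"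
  assumes M1: "matroid E1 I1" "binary E1 I1" and M2: "matroid E2 I2" "binary E2 I2"
    and T: "T = E1 \<inter> E2" "triangle E1 I1 T" "triangle E2 I2 T"
    and no_cocircuit_in_T: "\<forall>C. C \<subseteq> T \<longrightarrow> \<not> cocircuit E1 I1 C \<and> \<not> cocircuit E2 I2 C"
    and P: "matroid (E1 \<union> E2) IP"
    and flat_P_iff: "\<forall>F. is_flat (E1 \<union> E2) IP F \<longleftrightarrow>
                       F \<subseteq> E1 \<union> E2 \<and> is_flat E1 I1 (F \<inter> E1) \<and> is_flat E2 I2 (F \<inter> E2)"
begin

sublocale M1: finite_matroid E1 I1 by (rule finite_matroid.intro[OF M1(1)])
sublocale M2: finite_matroid E2 I2 by (rule finite_matroid.intro[OF M2(1)])
sublocale P: finite_matroid "E1 \<union> E2" IP by (rule finite_matroid.intro[OF P])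

(* The hypotheses are symmetric in the two sides: statements about side 2 are obtained from those
   about side 1 by interpreting this instance. *)
lemma three_sum_swap: "three_sum E2 E1 T I2 I1 IP"
proof
  show "matroid (E2 \<union> E1) IP" using P by (simp add: Un_commute)
  show "\<forall>F. is_flat (E2 \<union> E1) IP F \<longleftrightarrow>
          F \<subseteq> E2 \<union> E1 \<and> is_flat E2 I2 (F \<inter> E2) \<and> is_flat E1 I1 (F \<inter> E1)"
    using flat_P_iff by (auto simp: Un_commute)
qed (use M1 M2 T no_cocircuit_in_T in auto)

(* M = P \ T is the 3-sum of M1 and M2. *)
abbreviation EM :: "'a set" where "EM \<equiv> E1 \<union> E2 - T"
abbreviation IM :: "'a set \<Rightarrow> bool" where "IM \<equiv> delete_indep IP T"

lemma T_subset: "T \<subseteq> E1" "T \<subseteq> E2"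
  using T(1) by auto

lemma mem_T: "x \<in> E1 \<Longrightarrow> x \<in> E2 \<Longrightarrow> x \<in> T"
  using T(1) by blast

lemma card_T: "card T = 3"
  using T(2) unfolding triangle_def by blast

lemma finite_T: "finite T"
  using card_T by (metis card.infinite zero_neq_numeral)

lemma T_not_singleton: "T \<noteq> {x}"
  using card_T by auto

lemma flat_P_Int: "is_flat (E1 \<union> E2) IP G \<Longrightarrow> is_flat E1 I1 (G \<inter> E1)"
  using flat_P_iff by blast

lemma glue_Int:
  assumes "F1 \<subseteq> E1" "F2 \<subseteq> E2" "F1 \<inter> T = F2 \<inter> T"
  shows "(F1 \<union> F2) \<inter> E1 = F1" and "(F1 \<union> F2) \<inter> E2 = F2"
proof -
  have "F2 \<inter> E1 \<subseteq> F1" "F1 \<inter> E2 \<subseteq> F2" using assms T(1) by auto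
  thus "(F1 \<union> F2) \<inter> E1 = F1" "(F1 \<union> F2) \<inter> E2 = F2" using assms(1,2) by auto
qed

lemma flat_glue:
  assumes "is_flat E1 I1 F1" "is_flat E2 I2 F2" "F1 \<inter> T = F2 \<inter> T"
  shows "is_flat (E1 \<union> E2) IP (F1 \<union> F2)"
proof -
  have "F1 \<subseteq> E1" "F2 \<subseteq> E2" using assms M1.flat_subset_ground M2.flat_subset_ground by blast+
  thus ?thesis using flat_P_iff glue_Int[OF _ _ assms(3)] assms(1,2) by auto
qed

lemma flat_P_Int_T:
  assumes "is_flat (E1 \<union> E2) IP G"
  shows "G \<inter> T = {} \<or> (\<exists>x. G \<inter> T = {x}) \<or> T \<subseteq> G"
proof -
  have "G \<inter> E1 \<inter> T = G \<inter> T" using T_subset by auto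
  thus ?thesis using M1.flat_Int_triangle[OF T(2) flat_P_Int[OF assms]] by auto
qed

lemma flat_P_contains_T:
  assumes "is_flat (E1 \<union> E2) IP G" "E1 - T \<subseteq> G"
  shows "T \<subseteq> G"
proof -
  have "\<forall>C. C \<subseteq> T \<longrightarrow> \<not> cocircuit E1 I1 C" using no_cocircuit_in_T by simp
  hence "G \<inter> E1 = E1"
    by (rule M1.flat_eq_ground_of_no_cocircuit[OF _ flat_P_Int[OF assms(1)]]) (use assms(2) in auto)
  thus ?thesis using T_subset by auto
qed

lemma flat_P_compl_meets_sides:
  assumes "is_flat (E1 \<union> E2) IP G" "\<not> T \<subseteq> G"
  shows "(EM - G) \<inter> E1 \<noteq> {}" and "(EM - G) \<inter> E2 \<noteq> {}"
proof -
  interpret swap: three_sum E2 E1 T I2 I1 IP by (rule three_sum_swap)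
  show "(EM - G) \<inter> E1 \<noteq> {}" using flat_P_contains_T[OF assms(1)] assms(2) by blast
  show "(EM - G) \<inter> E2 \<noteq> {}" using swap.flat_P_contains_T[of G] assms by (auto simp: Un_commute)
qed

lemma hyperplane_P_glue_ground:
  assumes H: "hyperplane E1 I1 H1" "T \<subseteq> H1"
  shows "hyperplane (E1 \<union> E2) IP (H1 \<union> E2)"
  unfolding P.hyperplane_iff_coatom
proof (intro conjI allI impI)
  have H1: "is_flat E1 I1 H1" "H1 \<noteq> E1"
    and max: "\<And>F. is_flat E1 I1 F \<Longrightarrow> H1 \<subseteq> F \<Longrightarrow> F = H1 \<or> F = E1"
    using H(1) unfolding M1.hyperplane_iff_coatom by blast+
  have H1T: "H1 \<inter> T = E2 \<inter> T" using H(2) T_subset by blast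
  show "is_flat (E1 \<union> E2) IP (H1 \<union> E2)" by (rule flat_glue[OF H1(1) M2.flat_ground H1T])
  show "H1 \<union> E2 \<noteq> E1 \<union> E2"
    using glue_Int(1)[OF M1.flat_subset_ground[OF H1(1)] _ H1T] H1(2) by auto
  fix G assume G: "is_flat (E1 \<union> E2) IP G \<and> H1 \<union> E2 \<subseteq> G"
  moreover have "H1 \<subseteq> E1" using M1.flat_subset_ground[OF H1(1)] .
  ultimately have "G \<inter> E1 = H1 \<or> G \<inter> E1 = E1" using max[OF flat_P_Int] by blast
  moreover have "G \<inter> E1 \<union> E2 = G" using G P.flat_subset_ground by blast
  ultimately show "G = H1 \<union> E2 \<or> G = E1 \<union> E2" by auto
qed

lemma hyperplane_P_glue:
  assumes H1: "hyperplane E1 I1 H1" "H1 \<inter> T = {x}"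
    and H2: "hyperplane E2 I2 H2" "H2 \<inter> T = {x}"
  shows "hyperplane (E1 \<union> E2) IP (H1 \<union> H2)"
  unfolding P.hyperplane_iff_coatom
proof (intro conjI allI impI)
  have F1: "is_flat E1 I1 H1" "H1 \<noteq> E1"
    and max1: "\<And>F. is_flat E1 I1 F \<Longrightarrow> H1 \<subseteq> F \<Longrightarrow> F = H1 \<or> F = E1"
    using H1(1) unfolding M1.hyperplane_iff_coatom by blast+
  have F2: "is_flat E2 I2 H2" "H2 \<noteq> E2"
    and max2: "\<And>F. is_flat E2 I2 F \<Longrightarrow> H2 \<subseteq> F \<Longrightarrow> F = H2 \<or> F = E2"
    using H2(1) unfolding M2.hyperplane_iff_coatom by blast+
  have HT: "H1 \<inter> T = H2 \<inter> T" using H1(2) H2(2) by simp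
  have HE: "H1 \<subseteq> E1" "H2 \<subseteq> E2"
    using M1.flat_subset_ground[OF F1(1)] M2.flat_subset_ground[OF F2(1)] .
  note Int = glue_Int[OF HE HT]
  show "is_flat (E1 \<union> E2) IP (H1 \<union> H2)" by (rule flat_glue[OF F1(1) F2(1) HT])
  show "H1 \<union> H2 \<noteq> E1 \<union> E2" using Int(1) F1(2) by auto
  fix G assume G: "is_flat (E1 \<union> E2) IP G \<and> H1 \<union> H2 \<subseteq> G"
  have G1: "G \<inter> E1 = H1 \<or> G \<inter> E1 = E1" using G HE max1[OF flat_P_Int] by blast
  interpret swap: three_sum E2 E1 T I2 I1 IP by (rule three_sum_swap)
  have "is_flat E2 I2 (G \<inter> E2)" using G swap.flat_P_Int[of G] by (simp add: Un_commute)
  hence G2: "G \<inter> E2 = H2 \<or> G \<inter> E2 = E2" using G HE max2 by blast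
  have full: "G \<inter> E1 = E1 \<longleftrightarrow> G \<inter> E2 = E2"
  proof
    assume "G \<inter> E1 = E1"
    hence "T \<subseteq> G \<inter> E2" using T_subset by blast
    moreover have "\<not> T \<subseteq> H2" using H2(2) T_not_singleton by blast
    ultimately show "G \<inter> E2 = E2" using G2 by auto
  next
    assume "G \<inter> E2 = E2"
    hence "T \<subseteq> G \<inter> E1" using T_subset by blast
    moreover have "\<not> T \<subseteq> H1" using H1(2) T_not_singleton by blast
    ultimately show "G \<inter> E1 = E1" using G1 by auto
  qed
  have "G \<subseteq> E1 \<union> E2" using G P.flat_subset_ground by blast
  thus "G = H1 \<union> H2 \<or> G = E1 \<union> E2" using G1 G2 full by blast
qed

lemma hyperplane_P_Int:
  assumes G: "hyperplane (E1 \<union> E2) IP G" and E1G: "\<not> E1 \<subseteq> G"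
    and GT: "G \<inter> T \<noteq> {}"
  shows "hyperplane E1 I1 (G \<inter> E1)"
  unfolding M1.hyperplane_iff_coatom
proof (intro conjI allI impI)
  interpret swap: three_sum E2 E1 T I2 I1 IP by (rule three_sum_swap)
  have Gf: "is_flat (E1 \<union> E2) IP G"
    and max: "\<And>G'. is_flat (E1 \<union> E2) IP G' \<Longrightarrow> G \<subseteq> G' \<Longrightarrow> G' = G \<or> G' = E1 \<union> E2"
    using G unfolding P.hyperplane_iff_coatom by blast+
  have GU: "G = G \<inter> E1 \<union> G \<inter> E2" using P.flat_subset_ground[OF Gf] by blast
  show "is_flat E1 I1 (G \<inter> E1)" using flat_P_Int[OF Gf] .
  show "G \<inter> E1 \<noteq> E1" using E1G by blast
  fix F assume F: "is_flat E1 I1 F \<and> G \<inter> E1 \<subseteq> F"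
  have FE: "F \<subseteq> E1" using F M1.flat_subset_ground by blast
  have FT: "G \<inter> T \<subseteq> F \<inter> T" using F T_subset by blast
  show "F = G \<inter> E1 \<or> F = E1"
  proof (cases "F \<inter> T = G \<inter> T")
    case True
    hence FT2: "F \<inter> T = G \<inter> E2 \<inter> T" using T_subset by blast
    have "is_flat (E1 \<union> E2) IP (F \<union> G \<inter> E2)"
      using flat_glue[OF _ _ FT2] F swap.flat_P_Int[of G] Gf by (simp add: Un_commute)
    moreover have "G \<subseteq> F \<union> G \<inter> E2" using F GU by blast
    ultimately have "F \<union> G \<inter> E2 = G \<or> F \<union> G \<inter> E2 = E1 \<union> E2" using max by blast
    thus ?thesis using glue_Int(1)[OF FE _ FT2] by auto
  next
    case False
    have "F \<inter> T \<noteq> {}" using FT GT by blast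
    moreover have "F \<inter> T \<noteq> {y}" for y
    proof
      assume y: "F \<inter> T = {y}"
      hence "G \<inter> T = {y}" using FT GT by (metis subset_singletonD)
      thus False using False y by simp
    qed
    ultimately have TF: "T \<subseteq> F" using M1.flat_Int_triangle[OF T(2)] F by blast
    hence FT2: "F \<inter> T = E2 \<inter> T" using T_subset by blast
    have "is_flat (E1 \<union> E2) IP (F \<union> E2)" using flat_glue[OF _ M2.flat_ground FT2] F by blast
    moreover have "G \<subseteq> F \<union> E2" using F GU by blast
    moreover have "\<not> T \<subseteq> G" using False TF by blast
    hence "F \<union> E2 \<noteq> G" using T_subset by blast
    ultimately have "F \<union> E2 = E1 \<union> E2" using max by blast
    thus ?thesis using glue_Int(1)[OF FE _ FT2] by auto
  qed
qed

lemma hyperplane_P_meets_T: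
  assumes G: "hyperplane (E1 \<union> E2) IP G"
  shows "G \<inter> T \<noteq> {}"
proof
  assume GT: "G \<inter> T = {}"
  interpret swap: three_sum E2 E1 T I2 I1 IP by (rule three_sum_swap)
  have Gf: "is_flat (E1 \<union> E2) IP G"
    and max: "\<And>G'. is_flat (E1 \<union> E2) IP G' \<Longrightarrow> G \<subseteq> G' \<Longrightarrow> G' = G \<or> G' = E1 \<union> E2"
    using G unfolding P.hyperplane_iff_coatom by blast+
  have "T \<noteq> {}" using card_T by auto
  then obtain t where t: "t \<in> T" by blast
  have tE: "t \<in> E1" "t \<in> E2" and tG: "t \<notin> G" using t T_subset GT by blast+
  have F1: "is_flat E1 I1 (G \<inter> E1)" using flat_P_Int[OF Gf] .
  have F2: "is_flat E2 I2 (G \<inter> E2)" using swap.flat_P_Int[of G] Gf by (simp add: Un_commute)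
  have FT: "G \<inter> E1 \<inter> T = {}" "G \<inter> E2 \<inter> T = {}" using GT by blast+
  have sub: "insert t (G \<inter> E1) \<subseteq> E1" "insert t (G \<inter> E2) \<subseteq> E2" using tE by blast+
  (* G Int Ei is not a hyperplane of the binary matroid Mi, so adding t keeps it a proper flat;
     gluing these flats (or one of them with the other ground set) lands strictly between G and
     the ground set. *)
  define A1 where "A1 = M1.cl (insert t (G \<inter> E1))"
  define A2 where "A2 = M2.cl (insert t (G \<inter> E2))"
  have A1: "is_flat E1 I1 A1" "insert t (G \<inter> E1) \<subseteq> A1" "A1 \<noteq> E1"
    and A1T: "A1 \<inter> T = {t} \<or> T \<subseteq> A1"
    unfolding A1_def using M1.flat_cl[OF sub(1)] M1.subset_cl[OF sub(1)]
      M1.binary_cl_insert_triangle[OF M1(2) T(2) F1 FT(1) t] by blast+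
  have A2: "is_flat E2 I2 A2" "insert t (G \<inter> E2) \<subseteq> A2" "A2 \<noteq> E2"
    and A2T: "A2 \<inter> T = {t} \<or> T \<subseteq> A2"
    unfolding A2_def using M2.flat_cl[OF sub(2)] M2.subset_cl[OF sub(2)]
      M2.binary_cl_insert_triangle[OF M2(2) T(3) F2 FT(2) t] by blast+
  have GU: "G \<subseteq> E1 \<union> E2" using P.flat_subset_ground[OF Gf] .
  have glue_full: "F1 = E1 \<and> F2 = E2"
    if F: "is_flat E1 I1 F1" "is_flat E2 I2 F2" "F1 \<inter> T = F2 \<inter> T"
      and sub: "insert t (G \<inter> E1) \<subseteq> F1" "insert t (G \<inter> E2) \<subseteq> F2"
    for F1 F2
  proof -
    have FE: "F1 \<subseteq> E1" "F2 \<subseteq> E2" using M1.flat_subset_ground[OF F(1)] M2.flat_subset_ground[OF F(2)] .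
    have "G \<subseteq> F1 \<union> F2" using sub GU by blast
    moreover have "F1 \<union> F2 \<noteq> G" using sub(1) tG by blast
    ultimately have "F1 \<union> F2 = E1 \<union> E2" using max[OF flat_glue[OF F]] by blast
    thus ?thesis using glue_Int[OF FE F(3)] by auto
  qed
  have "T \<subseteq> A1 \<or> T \<subseteq> A2 \<or> A1 \<inter> T = A2 \<inter> T" using A1T A2T by auto
  moreover have "\<not> T \<subseteq> A1"
    using glue_full[OF A1(1) M2.flat_ground _ A1(2) sub(2)] A1(3) T_subset by blast
  moreover have "\<not> T \<subseteq> A2"
    using glue_full[OF M1.flat_ground A2(1) _ sub(1) A2(2)] A2(3) T_subset by blast
  moreover have "A1 \<inter> T \<noteq> A2 \<inter> T"
    using glue_full[OF A1(1) A2(1) _ A1(2) A2(2)] A1(3) by blast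
  ultimately show False by blast
qed

lemma hyperplane_P_contains_side:
  assumes G: "hyperplane (E1 \<union> E2) IP G" and TG: "T \<subseteq> G"
  shows "E1 \<subseteq> G \<or> E2 \<subseteq> G"
proof (rule ccontr)
  assume A: "\<not> (E1 \<subseteq> G \<or> E2 \<subseteq> G)"
  interpret swap: three_sum E2 E1 T I2 I1 IP by (rule three_sum_swap)
  have Gf: "is_flat (E1 \<union> E2) IP G"
    and max: "\<And>G'. is_flat (E1 \<union> E2) IP G' \<Longrightarrow> G \<subseteq> G' \<Longrightarrow> G' = G \<or> G' = E1 \<union> E2"
    using G unfolding P.hyperplane_iff_coatom by blast+
  have FT: "E1 \<inter> T = G \<inter> E2 \<inter> T" using TG T_subset by blast
  have "is_flat E2 I2 (G \<inter> E2)" using swap.flat_P_Int[of G] Gf by (simp add: Un_commute)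
  hence "is_flat (E1 \<union> E2) IP (E1 \<union> G \<inter> E2)" using flat_glue[OF M1.flat_ground _ FT] by blast
  moreover have "G \<subseteq> E1 \<union> G \<inter> E2" using P.flat_subset_ground[OF Gf] by blast
  ultimately consider "E1 \<union> G \<inter> E2 = G" | "E1 \<union> G \<inter> E2 = E1 \<union> E2" using max by blast
  thus False
  proof cases
    case 1
    thus False using A by blast
  next
    case 2
    have "(E1 \<union> G \<inter> E2) \<inter> E2 = G \<inter> E2" by (rule glue_Int(2)[OF subset_refl Int_lower2 FT])
    hence "(E1 \<union> E2) \<inter> E2 = G \<inter> E2" unfolding 2 .
    thus False using A by blast
  qed
qed

lemma hyperplane_P_cases:
  assumes G: "hyperplane (E1 \<union> E2) IP G"
  obtains (side1) "E2 \<subseteq> G" "T \<subseteq> G" "hyperplane E1 I1 (G \<inter> E1)"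
    | (side2) "E1 \<subseteq> G" "T \<subseteq> G" "hyperplane E2 I2 (G \<inter> E2)"
    | (both) x where "G \<inter> T = {x}" "hyperplane E1 I1 (G \<inter> E1)" "hyperplane E2 I2 (G \<inter> E2)"
proof -
  interpret swap: three_sum E2 E1 T I2 I1 IP by (rule three_sum_swap)
  have GT: "G \<inter> T \<noteq> {}" by (rule hyperplane_P_meets_T[OF G])
  have Gf: "is_flat (E1 \<union> E2) IP G" and GU: "G \<noteq> E1 \<union> E2"
    using G unfolding P.hyperplane_iff_coatom by blast+
  have H1: "hyperplane E1 I1 (G \<inter> E1)" if "\<not> E1 \<subseteq> G"
    using hyperplane_P_Int[OF G that GT] .
  have H2: "hyperplane E2 I2 (G \<inter> E2)" if "\<not> E2 \<subseteq> G"
    using swap.hyperplane_P_Int[of G] G that GT by (simp add: Un_commute)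
  consider (single) x where "G \<inter> T = {x}" | (full) "T \<subseteq> G"
    using flat_P_Int_T[OF Gf] GT by blast
  then show ?thesis
  proof cases
    case (single x)
    hence "\<not> T \<subseteq> G" using T_not_singleton by (metis Int_absorb1)
    hence "\<not> E1 \<subseteq> G" "\<not> E2 \<subseteq> G" using T_subset by blast+
    thus ?thesis using both[OF single H1 H2] by blast
  next
    case full
    have "E1 \<subseteq> G \<or> E2 \<subseteq> G" by (rule hyperplane_P_contains_side[OF G full])
    moreover have "\<not> (E1 \<subseteq> G \<and> E2 \<subseteq> G)" using GU P.flat_subset_ground[OF Gf] by blast
    ultimately show ?thesis
    proof (cases "E1 \<subseteq> G")
      case True
      hence "\<not> E2 \<subseteq> G" using \<open>\<not> (E1 \<subseteq> G \<and> E2 \<subseteq> G)\<close> by blast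
      thus ?thesis using side2[OF True full H2] by blast
    next
      case False
      hence "E2 \<subseteq> G" using \<open>E1 \<subseteq> G \<or> E2 \<subseteq> G\<close> by blast
      thus ?thesis using side1[OF _ full H1[OF False]] by blast
    qed
  qed
qed

section \<open>Cocircuits of the 3-sum\<close>

lemma T_subset_cl_P: "T \<subseteq> P.cl (E1 - T)"
proof -
  have sub: "E1 - T \<subseteq> E1 \<union> E2" by blast
  show ?thesis using flat_P_contains_T[OF P.flat_cl[OF sub] P.subset_cl[OF sub]] .
qed

lemma rk_P_minus_T: "rk IP (E1 \<union> E2 - T) = rk IP (E1 \<union> E2)"
proof -
  have sub: "E1 \<union> E2 - T \<subseteq> E1 \<union> E2" by blast
  have cl: "E1 \<union> E2 - T \<subseteq> P.cl (E1 \<union> E2 - T)" by (rule P.subset_cl[OF sub])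
  have "P.cl (E1 - T) \<subseteq> P.cl (E1 \<union> E2 - T)" by (rule P.cl_mono) blast
  hence "T \<subseteq> P.cl (E1 \<union> E2 - T)" using T_subset_cl_P by blast
  hence "P.cl (E1 \<union> E2 - T) = E1 \<union> E2" using cl P.cl_subset_ground by (intro subset_antisym) auto
  thus ?thesis using P.rk_cl[OF sub] by simp
qed

sublocale M: finite_matroid EM IM
  by (rule finite_matroid.intro[OF P.matroid_delete])

lemma cocircuit_M_of_hyperplane_P:
  assumes G: "hyperplane (E1 \<union> E2) IP G" and GT: "G \<inter> T \<subseteq> P.cl (G - T)"
  shows "cocircuit EM IM (EM - G)"
proof -
  have Gf: "is_flat (E1 \<union> E2) IP G" using G unfolding hyperplane_def by blast
  have GU: "G \<subseteq> E1 \<union> E2" using P.flat_subset_ground[OF Gf] .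
  have "P.cl (G - T) \<subseteq> G" by (rule P.cl_subset_flat[OF Gf]) blast
  moreover have "G - T \<subseteq> P.cl (G - T)" by (rule P.subset_cl) (use GU in blast)
  ultimately have "P.cl (G - T) = G" using GT by blast
  moreover have "G - T \<subseteq> EM" using GU by blast
  ultimately have "hyperplane EM IM (G - T)" using P.hyperplane_delete_iff[OF rk_P_minus_T] G by simp
  hence "cocircuit EM IM (EM - (G - T))" by (rule M.cocircuit_compl_hyperplane)
  moreover have "EM - (G - T) = EM - G" by blast
  ultimately show ?thesis by simp
qed

lemma symdiff_compl:
  assumes "H1 \<subseteq> E1" "H2 \<subseteq> E2" "H1 \<inter> T = H2 \<inter> T"
  shows "symdiff (E1 - H1) (E2 - H2) = EM - (H1 \<union> H2)"
proof -
  have "x \<in> H1 \<longleftrightarrow> x \<in> H2" if "x \<in> E1" "x \<in> E2" for x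
    using assms(3) mem_T[OF that] by blast
  thus ?thesis unfolding symdiff_def using assms(1,2) T_subset mem_T by auto
qed

lemma cocircuit_M_cases:
  assumes C: "cocircuit EM IM C"
  shows "(cocircuit E1 I1 C \<and> C \<inter> T = {}) \<or> (cocircuit E2 I2 C \<and> C \<inter> T = {}) \<or>
    (\<exists>C1 C2. cocircuit E1 I1 C1 \<and> cocircuit E2 I2 C2 \<and> C1 \<inter> T = C2 \<inter> T
      \<and> card (C1 \<inter> T) = 2 \<and> C = symdiff C1 C2)"
proof -
  have CE: "C \<subseteq> EM" using C unfolding cocircuit_def circuit_def by blast
  hence "hyperplane EM IM (EM - C)" using M.cocircuit_iff_hyperplane C by blast
  moreover have "EM - C \<subseteq> EM" by blast
  ultimately have G: "hyperplane (E1 \<union> E2) IP (P.cl (EM - C))" and GC: "P.cl (EM - C) - T = EM - C"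
    using P.hyperplane_delete_iff[OF rk_P_minus_T] by blast+
  define G where "G = P.cl (EM - C)"
  have C_eq: "C = EM - G" using GC CE unfolding G_def by blast
  have CT: "C \<inter> T = {}" using CE by blast
  from G[folded G_def] show ?thesis
  proof (cases rule: hyperplane_P_cases)
    case side1
    hence "C = E1 - G \<inter> E1" using C_eq by blast
    thus ?thesis using M1.cocircuit_compl_hyperplane[OF side1(3)] CT by simp
  next
    case side2
    hence "C = E2 - G \<inter> E2" using C_eq by blast
    thus ?thesis using M2.cocircuit_compl_hyperplane[OF side2(3)] CT by simp
  next
    case (both x)
    have x: "x \<in> T" using both(1) by blast
    have "(E1 - G \<inter> E1) \<inter> T = T - {x}" "(E2 - G \<inter> E2) \<inter> T = T - {x}"
      using both(1) T_subset by blast+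
    moreover have "card (T - {x}) = 2" using card_T finite_T x by simp
    moreover have "C = symdiff (E1 - G \<inter> E1) (E2 - G \<inter> E2)"
    proof -
      have "G \<inter> E1 \<inter> T = G \<inter> E2 \<inter> T" using T_subset by blast
      moreover have "G \<subseteq> E1 \<union> E2" unfolding G_def by (rule P.cl_subset_ground)
      hence "G \<inter> E1 \<union> G \<inter> E2 = G" by blast
      ultimately show ?thesis using C_eq symdiff_compl[OF Int_lower2 Int_lower2] by simp
    qed
    ultimately have "\<exists>C1 C2. cocircuit E1 I1 C1 \<and> cocircuit E2 I2 C2 \<and> C1 \<inter> T = C2 \<inter> T
        \<and> card (C1 \<inter> T) = 2 \<and> C = symdiff C1 C2"
      using M1.cocircuit_compl_hyperplane[OF both(2)] M2.cocircuit_compl_hyperplane[OF both(3)]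
      by (intro exI[of _ "E1 - G \<inter> E1"] exI[of _ "E2 - G \<inter> E2"]) simp
    thus ?thesis by blast
  qed
qed

lemma cocircuit_M_of_cocircuit1:
  assumes C: "cocircuit E1 I1 C" "C \<inter> T = {}"
  shows "cocircuit EM IM C"
proof -
  interpret swap: three_sum E2 E1 T I2 I1 IP by (rule three_sum_swap)
  have CE: "C \<subseteq> E1" using C(1) unfolding cocircuit_def circuit_def by blast
  have H: "hyperplane E1 I1 (E1 - C)" using C(1) M1.cocircuit_iff_hyperplane[OF CE] by blast
  have TH: "T \<subseteq> E1 - C" using C(2) T_subset by blast
  have G: "hyperplane (E1 \<union> E2) IP (E1 - C \<union> E2)" by (rule hyperplane_P_glue_ground[OF H TH])
  have "P.cl (E2 - T) \<subseteq> P.cl (E1 - C \<union> E2 - T)" by (rule P.cl_mono) blast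
  hence "T \<subseteq> P.cl (E1 - C \<union> E2 - T)" using swap.T_subset_cl_P by (simp add: Un_commute)
  hence "cocircuit EM IM (EM - (E1 - C \<union> E2))" using cocircuit_M_of_hyperplane_P[OF G] by blast
  moreover have "EM - (E1 - C \<union> E2) = C" using CE C(2) mem_T by blast
  ultimately show ?thesis by simp
qed

(* In this context H - T is a flat of corank 2 of P, and the hyperplanes containing it are H and
   the closures of H - T plus one of the other two points of T. *)
context
  fixes H x
  assumes H: "hyperplane (E1 \<union> E2) IP H" and HT: "H \<inter> T = {x}"
    and x_not_cl: "x \<notin> P.cl (H - T)"
begin

lemma insert_H_minus_T: "insert x (H - T) = H"
  using HT by blast

lemma subset_cl_insert:
  assumes "e \<in> E1 \<union> E2" shows "insert e (H - T) \<subseteq> P.cl (insert e (H - T))"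
  by (rule P.subset_cl) (use assms P.hyperplane_subset_ground[OF H] in blast)

lemma H_minus_T_flat: "is_flat (E1 \<union> E2) IP (H - T)"
proof -
  have Hf: "is_flat (E1 \<union> E2) IP H" using H unfolding hyperplane_def by blast
  have HU: "H - T \<subseteq> E1 \<union> E2" using P.flat_subset_ground[OF Hf] by blast
  have "P.cl (H - T) \<subseteq> H" by (rule P.cl_subset_flat[OF Hf]) blast
  moreover have "y = x" if "y \<in> H" "y \<in> T" for y using HT that by blast
  ultimately have "P.cl (H - T) \<subseteq> H - T" using x_not_cl by blast
  hence "P.cl (H - T) = H - T" using P.subset_cl[OF HU] by blast
  thus ?thesis using P.flat_cl[OF HU] by simp
qed

lemma rk_H_minus_T: "rk IP (E1 \<union> E2) = Suc (Suc (rk IP (H - T)))"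
proof -
  have "x \<in> E1 \<union> E2" using HT T_subset by blast
  hence "rk IP H = Suc (rk IP (H - T))"
    using P.rk_insert_not_cl[of x "H - T"] x_not_cl insert_H_minus_T by simp
  thus ?thesis using H unfolding hyperplane_def by simp
qed

lemma hyperplane_cl_insert_T:
  assumes c: "c \<in> T" "c \<noteq> x"
  shows "hyperplane (E1 \<union> E2) IP (P.cl (insert c (H - T)))"
    and "P.cl (insert c (H - T)) \<inter> T = {c}"
proof -
  let ?G = "P.cl (insert c (H - T))"
  have cU: "c \<in> E1 \<union> E2 - (H - T)" using c T_subset by blast
  show G: "hyperplane (E1 \<union> E2) IP ?G"
    by (rule P.hyperplane_cl_insert_corank2[OF H_minus_T_flat rk_H_minus_T cU])
  have sub: "insert c (H - T) \<subseteq> ?G" using subset_cl_insert cU by blast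
  have x_notin: "x \<notin> ?G"
  proof
    assume "x \<in> ?G"
    hence "insert x (H - T) \<subseteq> ?G" using sub by blast
    hence "H \<subseteq> ?G" by (simp only: insert_H_minus_T)
    hence "H = ?G" using P.hyperplane_eq[OF H G] by blast
    moreover have "c \<notin> H" using HT c by blast
    ultimately show False using sub by blast
  qed
  have "is_flat (E1 \<union> E2) IP ?G" using G unfolding hyperplane_def by blast
  hence "?G \<inter> T = {} \<or> (\<exists>y. ?G \<inter> T = {y}) \<or> T \<subseteq> ?G" by (rule flat_P_Int_T)
  moreover have "?G \<inter> T \<noteq> {}" using sub c by blast
  moreover have "\<not> T \<subseteq> ?G" using x_notin HT by blast
  ultimately obtain y where y: "?G \<inter> T = {y}" by blast
  moreover have "c \<in> ?G \<inter> T" using sub c by blast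
  ultimately show "?G \<inter> T = {c}" by simp
qed

lemma hyperplane_above_H_minus_T:
  assumes G: "hyperplane (E1 \<union> E2) IP G" and sub: "H - T \<subseteq> G"
  shows "G = H \<or> (\<exists>c\<in>T - {x}. G = P.cl (insert c (H - T)))"
proof -
  obtain c where c: "c \<in> G" "c \<in> T" using hyperplane_P_meets_T[OF G] by blast
  show ?thesis
  proof (cases "c = x")
    case True
    hence "insert x (H - T) \<subseteq> G" using sub c by blast
    hence "H \<subseteq> G" by (simp only: insert_H_minus_T)
    thus ?thesis using P.hyperplane_eq[OF H G] by blast
  next
    case False
    have "insert c (H - T) \<subseteq> G" using sub c by blast
    hence "P.cl (insert c (H - T)) \<subseteq> G"
      using P.cl_subset_flat G unfolding hyperplane_def by blast
    hence "P.cl (insert c (H - T)) = G"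
      using P.hyperplane_eq[OF hyperplane_cl_insert_T(1)[OF c(2) False] G] by blast
    thus ?thesis using c False by blast
  qed
qed

context
  fixes c d
  assumes T_eq: "T = {x, c, d}" and distinct: "x \<noteq> c" "x \<noteq> d" "c \<noteq> d"
begin

lemma c_d_in_ground: "c \<in> E1 \<union> E2" "d \<in> E1 \<union> E2"
  using T_eq T_subset by blast+

lemma EM_subset_cl_insert_Un: "EM \<subseteq> P.cl (insert c (H - T)) \<union> P.cl (insert d (H - T))"
proof
  fix y assume y: "y \<in> EM"
  show "y \<in> P.cl (insert c (H - T)) \<union> P.cl (insert d (H - T))"
  proof (cases "y \<in> H")
    case True
    thus ?thesis using y subset_cl_insert[OF c_d_in_ground(1)] by blast
  next
    case False
    have yU: "y \<in> E1 \<union> E2 - (H - T)" using y False by blast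
    have Gy: "hyperplane (E1 \<union> E2) IP (P.cl (insert y (H - T)))"
      by (rule P.hyperplane_cl_insert_corank2[OF H_minus_T_flat rk_H_minus_T yU])
    have sub: "insert y (H - T) \<subseteq> P.cl (insert y (H - T))" using subset_cl_insert yU by blast
    hence "P.cl (insert y (H - T)) \<noteq> H" using False by blast
    then obtain e where "e \<in> T - {x}" "P.cl (insert y (H - T)) = P.cl (insert e (H - T))"
      using hyperplane_above_H_minus_T[OF Gy] sub by blast
    moreover have "e = c \<or> e = d" using calculation(1) T_eq by blast
    ultimately show ?thesis using sub by auto
  qed
qed

lemma cl_insert_Int_cl_insert: "P.cl (insert c (H - T)) \<inter> P.cl (insert d (H - T)) = H - T"
proof -
  let ?Gc = "P.cl (insert c (H - T))" and ?Gd = "P.cl (insert d (H - T))"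
  have Gc: "hyperplane (E1 \<union> E2) IP ?Gc" "?Gc \<inter> T = {c}"
    using hyperplane_cl_insert_T[of c] T_eq distinct by auto
  have Gd: "hyperplane (E1 \<union> E2) IP ?Gd" "?Gd \<inter> T = {d}"
    using hyperplane_cl_insert_T[of d] T_eq distinct by auto
  have flats: "is_flat (E1 \<union> E2) IP ?Gc" "is_flat (E1 \<union> E2) IP ?Gd"
    using Gc(1) Gd(1) unfolding hyperplane_def by blast+
  have sub: "H - T \<subseteq> ?Gc \<inter> ?Gd" using subset_cl_insert c_d_in_ground by blast
  have "?Gc \<inter> ?Gd \<noteq> ?Gc"
  proof
    assume "?Gc \<inter> ?Gd = ?Gc"
    hence "?Gc = ?Gd" using P.hyperplane_eq[OF Gc(1) Gd(1)] by blast
    thus False using Gc(2) Gd(2) distinct by auto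
  qed
  moreover have "rk IP ?Gc = Suc (rk IP (H - T))" using Gc(1) rk_H_minus_T unfolding hyperplane_def by simp
  ultimately show ?thesis
    using P.flat_between[OF H_minus_T_flat P.flat_Int[OF flats] flats(1) sub] by blast
qed

lemma cocircuit_M_cl_insert: "cocircuit EM IM (EM - P.cl (insert c (H - T)))"
proof -
  let ?Gc = "P.cl (insert c (H - T))" and ?Gd = "P.cl (insert d (H - T))"
  have Gc: "hyperplane (E1 \<union> E2) IP ?Gc" "?Gc \<inter> T = {c}"
    using hyperplane_cl_insert_T[of c] T_eq distinct by auto
  have Gd: "hyperplane (E1 \<union> E2) IP ?Gd" "?Gd \<inter> T = {d}"
    using hyperplane_cl_insert_T[of d] T_eq distinct by auto
  have Gcf: "is_flat (E1 \<union> E2) IP ?Gc" using Gc(1) unfolding hyperplane_def by blast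
  have GcU: "?Gc - T \<subseteq> E1 \<union> E2" using P.flat_subset_ground[OF Gcf] by blast
  have HGc: "H - T \<subseteq> ?Gc - T" using subset_cl_insert c_d_in_ground by blast
  (* Otherwise Gc = insert c (H - T), so the covering puts E1 - T into Gd, which then contains T. *)
  have "c \<in> P.cl (?Gc - T)"
  proof (rule ccontr)
    assume c_not: "c \<notin> P.cl (?Gc - T)"
    have "P.cl (?Gc - T) = H - T \<or> P.cl (?Gc - T) = ?Gc"
    proof (rule P.flat_between[OF H_minus_T_flat P.flat_cl[OF GcU] Gcf])
      show "H - T \<subseteq> P.cl (?Gc - T)" using HGc P.subset_cl[OF GcU] by blast
      show "P.cl (?Gc - T) \<subseteq> ?Gc" by (rule P.cl_subset_flat[OF Gcf]) blast
      show "rk IP ?Gc = Suc (rk IP (H - T))" using Gc(1) rk_H_minus_T unfolding hyperplane_def by simp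
    qed
    moreover have "P.cl (?Gc - T) \<noteq> ?Gc" using c_not Gc(2) by blast
    ultimately have eq: "P.cl (?Gc - T) = H - T" by blast
    have "?Gc - T \<subseteq> H - T" using P.subset_cl[OF GcU] unfolding eq .
    hence "EM \<subseteq> ?Gd" using EM_subset_cl_insert_Un subset_cl_insert[OF c_d_in_ground(2)] by blast
    hence "(EM - ?Gd) \<inter> E1 = {}" by blast
    moreover have "\<not> T \<subseteq> ?Gd" using Gd(2) distinct T_eq by blast
    ultimately show False
      using flat_P_compl_meets_sides(1) Gd(1) unfolding hyperplane_def by blast
  qed
  thus ?thesis using cocircuit_M_of_hyperplane_P[OF Gc(1)] Gc(2) by simp
qed

end

lemma cocircuit_M_split:
  "\<exists>R Q. cocircuit EM IM R \<and> cocircuit EM IM Q \<and> R \<inter> Q = {} \<and> EM - H = R \<union> Q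
     \<and> R \<inter> E1 \<noteq> {} \<and> R \<inter> E2 \<noteq> {} \<and> Q \<inter> E1 \<noteq> {} \<and> Q \<inter> E2 \<noteq> {}"
proof -
  have xT: "x \<in> T" using HT by blast
  hence "card (T - {x}) = 2" using card_T finite_T by simp
  then obtain a b where ab: "T - {x} = {a, b}" "a \<noteq> b" by (meson card_2_iff)
  have T_eq: "T = {x, a, b}" using ab(1) xT by (metis insert_Diff)
  have "a \<in> T - {x}" "b \<in> T - {x}" using ab(1) by auto
  hence distinct: "x \<noteq> a" "x \<noteq> b" "a \<noteq> b" using ab(2) by auto
  let ?Ga = "P.cl (insert a (H - T))" and ?Gb = "P.cl (insert b (H - T))"
  have T_eq': "T = {x, b, a}" using T_eq by blast
  have Ga: "hyperplane (E1 \<union> E2) IP ?Ga" "?Ga \<inter> T = {a}"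
    using hyperplane_cl_insert_T[of a] T_eq distinct by auto
  have Gb: "hyperplane (E1 \<union> E2) IP ?Gb" "?Gb \<inter> T = {b}"
    using hyperplane_cl_insert_T[of b] T_eq distinct by auto
  have T_notin: "\<not> T \<subseteq> ?Ga" "\<not> T \<subseteq> ?Gb" using Ga(2) Gb(2) distinct xT by blast+
  have flats: "is_flat (E1 \<union> E2) IP ?Ga" "is_flat (E1 \<union> E2) IP ?Gb"
    using Ga(1) Gb(1) unfolding hyperplane_def by blast+
  have "EM - H = EM - (?Ga \<inter> ?Gb)" unfolding cl_insert_Int_cl_insert[OF T_eq distinct] by blast
  hence union: "EM - H = (EM - ?Gb) \<union> (EM - ?Ga)" by blast
  have disjoint: "(EM - ?Gb) \<inter> (EM - ?Ga) = {}" using EM_subset_cl_insert_Un[OF T_eq distinct] by blast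
  note cocircuits = cocircuit_M_cl_insert[OF T_eq distinct]
    cocircuit_M_cl_insert[OF T_eq' distinct(2,1) not_sym[OF distinct(3)]]
  note meets = flat_P_compl_meets_sides[OF flats(1) T_notin(1)]
    flat_P_compl_meets_sides[OF flats(2) T_notin(2)]
  show ?thesis using cocircuits meets union disjoint by blast
qed

end

lemma cocircuit_M_or_split:
  assumes H: "hyperplane (E1 \<union> E2) IP H" and HT: "H \<inter> T = {x}"
  shows "cocircuit EM IM (EM - H) \<or>
    (\<exists>R Q. cocircuit EM IM R \<and> cocircuit EM IM Q \<and> R \<inter> Q = {} \<and> EM - H = R \<union> Q
       \<and> R \<inter> E1 \<noteq> {} \<and> R \<inter> E2 \<noteq> {} \<and> Q \<inter> E1 \<noteq> {} \<and> Q \<inter> E2 \<noteq> {})"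
proof (cases "x \<in> P.cl (H - T)")
  case True
  thus ?thesis using cocircuit_M_of_hyperplane_P[OF H] HT by simp
next
  case False
  thus ?thesis using cocircuit_M_split[OF H HT False] by blast
qed

lemma cocircuit_M_symdiff:
  assumes C1: "cocircuit E1 I1 C1" and C2: "cocircuit E2 I2 C2"
    and CT: "C1 \<inter> T = C2 \<inter> T" "card (C1 \<inter> T) = 2"
  shows "cocircuit EM IM (symdiff C1 C2) \<or>
    (\<exists>R Q. cocircuit EM IM R \<and> cocircuit EM IM Q \<and> R \<inter> Q = {} \<and> symdiff C1 C2 = R \<union> Q
       \<and> R \<inter> E1 \<noteq> {} \<and> R \<inter> E2 \<noteq> {} \<and> Q \<inter> E1 \<noteq> {} \<and> Q \<inter> E2 \<noteq> {})"
proof -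
  have CE: "C1 \<subseteq> E1" "C2 \<subseteq> E2" using C1 C2 unfolding cocircuit_def circuit_def by blast+
  have H1: "hyperplane E1 I1 (E1 - C1)" using M1.cocircuit_iff_hyperplane[OF CE(1)] C1 by blast
  have H2: "hyperplane E2 I2 (E2 - C2)" using M2.cocircuit_iff_hyperplane[OF CE(2)] C2 by blast
  have "card (T - C1) = 1"
    using card_Diff_subset_Int[of T C1] finite_T card_T CT(2) by (simp add: Int_commute)
  then obtain x where x: "T - C1 = {x}" using card_1_singleton_iff by (metis One_nat_def)
  have HT: "(E1 - C1) \<inter> T = {x}" "(E2 - C2) \<inter> T = {x}" using x CT(1) T_subset by blast+
  have H: "hyperplane (E1 \<union> E2) IP (E1 - C1 \<union> (E2 - C2))"
    by (rule hyperplane_P_glue[OF H1 HT(1) H2 HT(2)])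
  have "symdiff (E1 - (E1 - C1)) (E2 - (E2 - C2)) = EM - (E1 - C1 \<union> (E2 - C2))"
    by (rule symdiff_compl) (use HT in blast)+
  hence "symdiff C1 C2 = EM - (E1 - C1 \<union> (E2 - C2))" using CE by (simp add: double_diff)
  moreover have "(E1 - C1 \<union> (E2 - C2)) \<inter> T = {x}" using HT by blast
  ultimately show ?thesis using cocircuit_M_or_split[OF H] by simp
qed

end

theorem corollary3p6:
  fixes E1 E2 T :: "'a set" and I1 I2 IP :: "'a set \<Rightarrow> bool"
  assumes M1: "matroid E1 I1" "binary E1 I1"
      and M2: "matroid E2 I2" "binary E2 I2"
      and T: "T = E1 \<inter> E2" "triangle E1 I1 T" "triangle E2 I2 T"
      and nococ: "\<forall>C. C \<subseteq> T \<longrightarrow> \<not> cocircuit E1 I1 C \<and> \<not> cocircuit E2 I2 C"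
      and P: "matroid (E1 \<union> E2) IP"
      and P_flats: "\<forall>F. is_flat (E1 \<union> E2) IP F \<longleftrightarrow>
                        F \<subseteq> E1 \<union> E2 \<and> is_flat E1 I1 (F \<inter> E1) \<and> is_flat E2 I2 (F \<inter> E2)"
  defines "E \<equiv> (E1 \<union> E2) - T"
      and "I \<equiv> delete_indep IP T"
  shows
   "(\<forall>C. cocircuit E I C \<longrightarrow>
        (cocircuit E1 I1 C \<and> C \<inter> T = {}) \<or> (cocircuit E2 I2 C \<and> C \<inter> T = {}) \<or>
        (\<exists>C1 C2. cocircuit E1 I1 C1 \<and> cocircuit E2 I2 C2 \<and> C1 \<inter> T = C2 \<inter> T
                 \<and> card (C1 \<inter> T) = 2 \<and> C = symdiff C1 C2))
    \<and> (\<forall>C. (cocircuit E1 I1 C \<or> cocircuit E2 I2 C) \<and> C \<inter> T = {} \<longrightarrow> cocircuit E I C)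
    \<and> (\<forall>C1 C2. cocircuit E1 I1 C1 \<and> cocircuit E2 I2 C2 \<and> C1 \<inter> T = C2 \<inter> T
                 \<and> card (C1 \<inter> T) = 2 \<longrightarrow>
        cocircuit E I (symdiff C1 C2) \<or>
        (\<exists>R Q. cocircuit E I R \<and> cocircuit E I Q \<and> R \<inter> Q = {}
               \<and> symdiff C1 C2 = R \<union> Q
               \<and> R \<inter> E1 \<noteq> {} \<and> R \<inter> E2 \<noteq> {} \<and> Q \<inter> E1 \<noteq> {} \<and> Q \<inter> E2 \<noteq> {}))"
proof -
  interpret three_sum E1 E2 T I1 I2 IP
    using M1 M2 T nococ P P_flats by (rule three_sum.intro)
  interpret swap: three_sum E2 E1 T I2 I1 IP by (rule three_sum_swap)
  note cocircuit_M_of_cocircuit2 = swap.cocircuit_M_of_cocircuit1[unfolded Un_commute[of E2 E1]]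
  show ?thesis
    unfolding E_def I_def
    apply (intro conjI allI impI)
      apply (erule cocircuit_M_cases)
     apply (use cocircuit_M_of_cocircuit1 cocircuit_M_of_cocircuit2 in blast)
    apply (elim conjE, erule (3) cocircuit_M_symdiff)
    done
qed

end
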